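(* Let $m_1,\dots,m_n$ be odd integers, each greater than $1$, and let $-1$ denote the element $(-1,\dots,-1)$ of $U=\prod_{i=1}^n\operatorname{U}_{m_i}$. The short exact sequence $1\to\{\pm1\}\to U\to U/\{\pm1\}\to 1$ splits (equivalently, $\{\pm1\}$ has a complement in $U$) if and only if there exist $1\le j\le n$ and a prime $p\equiv 3\pmod 4$ with $p\mid m_j$.
   Context: $\operatorname{U}_m$ denotes the multiplicative group of units of $\mathbb Z/m\mathbb Z$. *)

theory Defs
  imports "HOL-Number_Theory.Number_Theory" "HOL-Algebra.Product_Groups" "HOL-Algebra.Coset"
begin

definition U_mod :: "int \<Rightarrow> int monoid" where
  "U_mod m = units_of (residue_ring m)"

definition unit_prod :: "nat \<Rightarrow> (nat \<Rightarrow> int) \<Rightarrow> (nat \<Rightarrow> int) monoid" where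
  "unit_prod n m = product_group {1..n} (\<lambda>i. U_mod (m i))"

text \<open>The element (-1,...,-1) of U; -1 in Z/mZ is represented by m - 1.\<close>
definition minus_one :: "nat \<Rightarrow> (nat \<Rightarrow> int) \<Rightarrow> (nat \<Rightarrow> int)" where
  "minus_one n m = (\<lambda>i\<in>{1..n}. m i - 1)"

definition has_complement :: "('a, 'b) monoid_scheme \<Rightarrow> 'a set \<Rightarrow> bool" where
  "has_complement G K \<longleftrightarrow>
     (\<exists>H. subgroup H G \<and> H \<inter> K = {\<one>\<^bsub>G\<^esub>} \<and> H <#>\<^bsub>G\<^esub> K = carrier G)"

end

theory Submission
  imports Defs
begin

text \<open>
  For an involution \<open>x \<noteq> 1\<close> of a finite abelian group, \<open>{1, x}\<close> has a complement iff \<open>x\<close>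
  is not a square: if \<open>H\<close> is a complement and \<open>y = h k\<close> with \<open>h \<in> H\<close>, \<open>k \<in> {1, x}\<close>
  were a square root of \<open>x\<close>, then \<open>x = h\<^sup>2 \<in> H\<close>; conversely a subgroup that is maximal among those containing all squares
  but not \<open>x\<close> has index 2 and is a complement. In \<open>U\<close> the element
  \<open>-1\<close> is a square iff \<open>-1\<close> is a square modulo every \<open>m\<^sub>i\<close>, and for odd \<open>m\<close> this holds
  iff no prime \<open>p \<equiv> 3 (mod 4)\<close> divides \<open>m\<close>: by Euler's criterion \<open>-1\<close> is a square modulo an
  odd prime \<open>p\<close> iff \<open>p \<equiv> 1 (mod 4)\<close>, and square roots of \<open>-1\<close> pass to coprime products by
  the Chinese remainder theorem and to prime powers by Hensel lifting.
\<close>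

lemma QuadRes_minus_one_prime_iff:
  fixes p :: int
  assumes "prime p" "odd p"
  shows "QuadRes p (-1) \<longleftrightarrow> [p = 1] (mod 4)"
proof -
  have p2: "p > 2"
    using assms prime_ge_2_int[of p] by (cases "p = 2") auto
  have "[Legendre (-1) p = (-1) ^ ((nat p - 1) div 2)] (mod p)"
    using euler_criterion[of "nat p" "-1"] assms(1) p2 by simp
  moreover have "Legendre (-1) p = (if QuadRes p (-1) then 1 else -1)"
  proof -
    have "\<not> [-1 = 0] (mod p)" using p2 by (simp add: cong_iff_dvd_diff zdvd_not_zless)
    then show ?thesis unfolding Legendre_def by simp
  qed
  moreover have "(-1::int) ^ ((nat p - 1) div 2) = (if [p = 1] (mod 4) then 1 else -1)"
  proof -
    have "int ((nat p - 1) div 2) = (p - 1) div 2" using p2 by simp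
    then have "even ((nat p - 1) div 2) \<longleftrightarrow> even ((p - 1) div 2)" by (metis even_of_nat)
    also have "\<dots> \<longleftrightarrow> [p = 1] (mod 4)" using assms(2) unfolding cong_def by presburger
    finally show ?thesis by (simp add: minus_one_power_iff)
  qed
  moreover have "\<not> [1 = -1] (mod p)"
    using p2 by (auto simp: cong_iff_dvd_diff zdvd_not_zless)
  ultimately show ?thesis
    by (cases "QuadRes p (-1)"; cases "[p = 1] (mod 4)") (auto simp: cong_sym_eq)
qed

lemma QuadRes_mult_coprime:
  fixes m k a :: int
  assumes "QuadRes m a" "QuadRes k a" "coprime m k"
  shows "QuadRes (m * k) a"
proof -
  obtain y z where y: "[y^2 = a] (mod m)" and z: "[z^2 = a] (mod k)"
    using assms(1,2) unfolding QuadRes_def by blast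
  obtain w where "[w = y] (mod m)" "[w = z] (mod k)"
    using binary_chinese_remainder_int[OF assms(3)] by blast
  then have "[w^2 = a] (mod m)" "[w^2 = a] (mod k)"
    using y z by (metis cong_pow cong_trans)+
  then show ?thesis
    unfolding QuadRes_def using coprime_cong_mult[OF _ _ assms(3)] by blast
qed

text \<open>Hensel lifting: \<open>(y + t m)\<^sup>2 \<equiv> y\<^sup>2 + 2 y t m (mod p m)\<close>, and \<open>t\<close> is chosen to cancel
  \<open>(y\<^sup>2 - a) / m\<close> modulo \<open>p\<close>.\<close>

lemma QuadRes_lift_prime:
  fixes p m y a :: int
  assumes "prime p" "p dvd m" "[y^2 = a] (mod m)" "\<not> p dvd 2 * y"
  shows "QuadRes (p * m) a"
proof -
  obtain c where c: "y^2 - a = m * c"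
    using assms(3) unfolding cong_iff_dvd_diff by (rule dvdE)
  have "coprime (2 * y) p"
    using prime_imp_coprime[OF assms(1,4)] by (simp add: coprime_commute)
  then obtain u where u: "[2 * y * u = 1] (mod p)"
    using cong_solve_coprime_int by blast
  define t where "t = - c * u"
  have "[2 * y * t = - c] (mod p)"
    using cong_scalar_right[OF u, of "-c"] unfolding t_def by (simp add: ac_simps)
  then have "p dvd c + 2 * y * t + t^2 * m"
    using assms(2) by (simp add: cong_iff_dvd_diff add.commute)
  then have "p * m dvd (c + 2 * y * t + t^2 * m) * m"
    by (rule mult_dvd_mono) simp
  moreover have "(y + t * m)^2 - a = (c + 2 * y * t + t^2 * m) * m"
    using c by (simp add: power2_eq_square algebra_simps)
  ultimately have "[(y + t * m)^2 = a] (mod p * m)"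
    unfolding cong_iff_dvd_diff by simp
  then show ?thesis unfolding QuadRes_def by blast
qed

lemma QuadRes_minus_one_if_prime_divisors_1_mod_4:
  fixes m :: int
  assumes "\<And>p. prime p \<Longrightarrow> p dvd m \<Longrightarrow> [p = 1] (mod 4)"
  shows "QuadRes m (-1)"
  using assms
proof (induction m rule: prime_divisors_induct)
  case zero
  then show ?case using zero.prems[of 2] by (simp add: cong_def)
next
  case (unit m)
  then show ?case unfolding QuadRes_def cong_iff_dvd_diff using unit_imp_dvd by blast
next
  case (factor p m)
  have p1: "[p = 1] (mod 4)"
    by (rule factor.prems) (simp_all add: factor.hyps)
  then have "odd p" unfolding cong_def by presburger
  have "QuadRes m (-1)"
    by (rule factor.IH) (simp add: factor.prems)
  then obtain y where y: "[y^2 = -1] (mod m)"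
    unfolding QuadRes_def by blast
  show ?case
  proof (cases "p dvd m")
    case True
    have "\<not> p dvd y"
    proof
      assume "p dvd y"
      then have "[y^2 = 0] (mod p)" by (simp add: cong_0_iff power2_eq_square)
      moreover have "[y^2 = -1] (mod p)" using y True by (rule cong_dvd_modulus)
      ultimately have "[0 = -1] (mod p)" by (metis cong_sym cong_trans)
      then have "p dvd 1" by (simp add: cong_iff_dvd_diff)
      then show False using factor.hyps not_prime_unit by blast
    qed
    moreover have "\<not> p dvd 2"
    proof
      assume "p dvd 2"
      then have "p \<le> 2" by (simp add: zdvd_imp_le)
      with prime_ge_2_int[OF factor.hyps] \<open>odd p\<close> show False by simp
    qed
    ultimately have "\<not> p dvd 2 * y"
      using factor.hyps prime_dvd_mult_iff by blast
    then show ?thesis using QuadRes_lift_prime[OF factor.hyps True y] by simp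
  next
    case False
    then have "coprime p m" using prime_imp_coprime[OF factor.hyps] by blast
    moreover have "QuadRes p (-1)"
      using QuadRes_minus_one_prime_iff[OF factor.hyps \<open>odd p\<close>] p1 by simp
    ultimately show ?thesis using QuadRes_mult_coprime \<open>QuadRes m (-1)\<close> by blast
  qed
qed

lemma QuadRes_minus_one_odd_iff:
  fixes m :: int
  assumes "odd m"
  shows "QuadRes m (-1) \<longleftrightarrow> \<not> (\<exists>p. prime p \<and> [p = 3] (mod 4) \<and> p dvd m)"
proof
  assume m: "QuadRes m (-1)"
  show "\<not> (\<exists>p. prime p \<and> [p = 3] (mod 4) \<and> p dvd m)"
  proof
    assume "\<exists>p. prime p \<and> [p = 3] (mod 4) \<and> p dvd m"
    then obtain p where p: "prime p" "[p = 3] (mod 4)" "p dvd m" by blast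
    have "odd p" using assms p(3) by (metis dvd_trans)
    have "QuadRes p (-1)" using m p(3) unfolding QuadRes_def by (metis cong_dvd_modulus)
    then have "[p = 1] (mod 4)" using QuadRes_minus_one_prime_iff[OF p(1) \<open>odd p\<close>] by simp
    with p(2) show False by (simp add: cong_def)
  qed
next
  assume no_prime_3: "\<not> (\<exists>p. prime p \<and> [p = 3] (mod 4) \<and> p dvd m)"
  show "QuadRes m (-1)"
  proof (rule QuadRes_minus_one_if_prime_divisors_1_mod_4)
    fix p :: int assume p: "prime p" "p dvd m"
    then have "odd p" "\<not> [p = 3] (mod 4)" using assms no_prime_3 by (metis dvd_trans)+
    then show "[p = 1] (mod 4)" unfolding cong_def by presburger
  qed
qed

lemma (in group) subgroup_mem_of_mult_mem:
  assumes "subgroup H G" "a \<otimes> b \<in> H" "b \<in> H" "a \<in> carrier G"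
  shows "a \<in> H"
proof -
  have b: "b \<in> carrier G" using subgroup.mem_carrier[OF assms(1,3)] .
  have "a = (a \<otimes> b) \<otimes> inv b" using assms(4) b by (simp add: m_assoc)
  also have "\<dots> \<in> H"
    using assms(1-3) by (simp add: subgroup.m_closed subgroup.m_inv_closed)
  finally show ?thesis .
qed

lemma (in comm_group) squares_subgroup: "subgroup {y \<otimes> y | y. y \<in> carrier G} G"
proof (rule subgroupI)
  fix a assume "a \<in> {y \<otimes> y | y. y \<in> carrier G}"
  then obtain y where "y \<in> carrier G" "a = y \<otimes> y" by blast
  then show "inv a \<in> {y \<otimes> y | y. y \<in> carrier G}"
    by (auto simp: inv_mult)
next
  fix a b assume "a \<in> {y \<otimes> y | y. y \<in> carrier G}" "b \<in> {y \<otimes> y | y. y \<in> carrier G}"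
  then obtain y z where "y \<in> carrier G" "a = y \<otimes> y" "z \<in> carrier G" "b = z \<otimes> z" by blast
  then have "a \<otimes> b = (y \<otimes> z) \<otimes> (y \<otimes> z)" "y \<otimes> z \<in> carrier G" by (simp_all add: m_ac)
  then show "a \<otimes> b \<in> {y \<otimes> y | y. y \<in> carrier G}" by blast
qed auto

lemma (in comm_group) subgroup_adjoin:
  assumes H: "subgroup H G" and squares: "\<And>y. y \<in> carrier G \<Longrightarrow> y \<otimes> y \<in> H"
    and z: "z \<in> carrier G"
  shows "subgroup {g \<in> carrier G. g \<in> H \<or> z \<otimes> g \<in> H} G"
proof (rule subgroupI)
  fix g assume g: "g \<in> {g \<in> carrier G. g \<in> H \<or> z \<otimes> g \<in> H}"
  have "z \<otimes> inv g \<in> H" if "z \<otimes> g \<in> H"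
  proof (rule subgroup_mem_of_mult_mem[OF H _ that])
    have gc: "g \<in> carrier G" using g by simp
    have "(z \<otimes> inv g) \<otimes> (z \<otimes> g) = z \<otimes> (z \<otimes> (inv g \<otimes> g))"
      using gc z by (simp add: m_assoc m_lcomm[of "inv g" z])
    also have "\<dots> = z \<otimes> z" using gc z by simp
    finally have "(z \<otimes> inv g) \<otimes> (z \<otimes> g) = z \<otimes> z" .
    then show "(z \<otimes> inv g) \<otimes> (z \<otimes> g) \<in> H" using squares[OF z] by simp
  qed (use g z in simp)
  then show "inv g \<in> {g \<in> carrier G. g \<in> H \<or> z \<otimes> g \<in> H}"
    using g by (auto simp: subgroup.m_inv_closed[OF H])
next
  fix g h
  assume g: "g \<in> {g \<in> carrier G. g \<in> H \<or> z \<otimes> g \<in> H}"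
    and h: "h \<in> {g \<in> carrier G. g \<in> H \<or> z \<otimes> g \<in> H}"
  then have gc: "g \<in> carrier G" and hc: "h \<in> carrier G" by auto
  consider "g \<in> H" "h \<in> H" | "g \<in> H" "z \<otimes> h \<in> H" | "z \<otimes> g \<in> H" "h \<in> H"
    | "z \<otimes> g \<in> H" "z \<otimes> h \<in> H"
    using g h by blast
  then have "g \<otimes> h \<in> H \<or> z \<otimes> (g \<otimes> h) \<in> H"
  proof cases
    case 1
    then show ?thesis by (simp add: subgroup.m_closed[OF H])
  next
    case 2
    then have "g \<otimes> (z \<otimes> h) \<in> H" by (simp add: subgroup.m_closed[OF H])
    then show ?thesis using gc hc z by (simp add: m_lcomm)
  next
    case 3
    then have "(z \<otimes> g) \<otimes> h \<in> H" by (simp add: subgroup.m_closed[OF H])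
    then show ?thesis using gc hc z by (simp add: m_assoc)
  next
    case 4
    then have "(z \<otimes> g) \<otimes> (z \<otimes> h) \<in> H" by (simp add: subgroup.m_closed[OF H])
    then have "(g \<otimes> h) \<otimes> (z \<otimes> z) \<in> H" using gc hc z by (simp add: m_ac)
    then show ?thesis using subgroup_mem_of_mult_mem[OF H _ squares[OF z]] gc hc by blast
  qed
  then show "g \<otimes> h \<in> {g \<in> carrier G. g \<in> H \<or> z \<otimes> g \<in> H}" using gc hc by blast
qed (auto simp: subgroup.one_closed[OF H])

lemma (in comm_group) subgroup_avoiding_non_square:
  assumes fin: "finite (carrier G)" and x: "x \<in> carrier G"
    and not_square: "\<And>y. y \<in> carrier G \<Longrightarrow> y \<otimes> y \<noteq> x"
  obtains H where "subgroup H G" "x \<notin> H" "\<And>z. z \<in> carrier G \<Longrightarrow> z \<in> H \<or> x \<otimes> z \<in> H"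
proof -
  define P where
    "P H \<longleftrightarrow> subgroup H G \<and> (\<forall>y\<in>carrier G. y \<otimes> y \<in> H) \<and> x \<notin> H" for H
  have "P {y \<otimes> y | y. y \<in> carrier G}"
    unfolding P_def using squares_subgroup not_square by blast
  moreover have "card H < Suc (card (carrier G))" if "P H" for H
  proof -
    have "H \<subseteq> carrier G" using that unfolding P_def by (simp add: subgroup.subset)
    then show ?thesis using card_mono[OF fin] by (simp add: le_imp_less_Suc)
  qed
  ultimately obtain H where PH: "P H" and maximal: "\<And>H'. P H' \<Longrightarrow> card H' \<le> card H"
    using Lattices_Big.ex_has_greatest_nat[of P _ card] by blast
  then have H: "subgroup H G" and squares: "\<And>y. y \<in> carrier G \<Longrightarrow> y \<otimes> y \<in> H" and "x \<notin> H"
    unfolding P_def by auto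
  have "z \<in> H \<or> x \<otimes> z \<in> H" if z: "z \<in> carrier G" for z
  proof (rule ccontr)
    assume "\<not> (z \<in> H \<or> x \<otimes> z \<in> H)"
    define H' where "H' = {g \<in> carrier G. g \<in> H \<or> z \<otimes> g \<in> H}"
    have "subgroup H' G" unfolding H'_def using subgroup_adjoin[OF H squares z] .
    moreover have "x \<notin> H'"
      unfolding H'_def using \<open>x \<notin> H\<close> \<open>\<not> (z \<in> H \<or> x \<otimes> z \<in> H)\<close> x z by (simp add: m_comm)
    ultimately have "P H'" unfolding P_def H'_def using squares by auto
    moreover have "H \<subset> H'"
      unfolding H'_def using \<open>\<not> (z \<in> H \<or> x \<otimes> z \<in> H)\<close> squares[OF z] z subgroup.subset[OF H]
      by blast
    moreover have "finite H'" unfolding H'_def using fin by simp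
    ultimately have "card H < card H'" by (simp add: psubset_card_mono)
    with maximal[OF \<open>P H'\<close>] show False by simp
  qed
  then show thesis using that H \<open>x \<notin> H\<close> by blast
qed

lemma (in comm_group) has_complement_involution_iff:
  assumes fin: "finite (carrier G)" and x: "x \<in> carrier G" "x \<noteq> \<one>" "x \<otimes> x = \<one>"
  shows "has_complement G {\<one>, x} \<longleftrightarrow> \<not> (\<exists>y\<in>carrier G. y \<otimes> y = x)"
proof
  assume "has_complement G {\<one>, x}"
  then obtain H where H: "subgroup H G" "H \<inter> {\<one>, x} = {\<one>}" "H <#> {\<one>, x} = carrier G"
    unfolding has_complement_def by blast
  show "\<not> (\<exists>y\<in>carrier G. y \<otimes> y = x)"
  proof
    assume "\<exists>y\<in>carrier G. y \<otimes> y = x"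
    then obtain y where y: "y \<in> carrier G" "y \<otimes> y = x" by blast
    have "y \<in> H <#> {\<one>, x}" using H(3) y(1) by simp
    then obtain h k where hk: "h \<in> H" "k \<in> {\<one>, x}" "y = h \<otimes> k"
      unfolding set_mult_def by blast
    have h: "h \<in> carrier G" using subgroup.mem_carrier[OF H(1) hk(1)] .
    have "x = (h \<otimes> h) \<otimes> (k \<otimes> k)" using y hk h x(1) by (auto simp: m_ac)
    also have "\<dots> = h \<otimes> h" using hk h x by auto
    finally have "x \<in> H" using hk(1) by (simp add: subgroup.m_closed[OF H(1)])
    then show False using H(2) x(2) by auto
  qed
next
  assume "\<not> (\<exists>y\<in>carrier G. y \<otimes> y = x)"
  then obtain H where H: "subgroup H G" "x \<notin> H"
    and cover: "\<And>z. z \<in> carrier G \<Longrightarrow> z \<in> H \<or> x \<otimes> z \<in> H"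
    using subgroup_avoiding_non_square[OF fin x(1)] by auto
  have "H \<inter> {\<one>, x} = {\<one>}" using subgroup.one_closed[OF H(1)] H(2) by auto
  moreover have "H <#> {\<one>, x} = carrier G"
  proof
    show "H <#> {\<one>, x} \<subseteq> carrier G"
      using subgroup.subset[OF H(1)] x(1) by (auto simp: set_mult_def)
    show "carrier G \<subseteq> H <#> {\<one>, x}"
    proof
      fix z assume z: "z \<in> carrier G"
      consider "z \<in> H" | "x \<otimes> z \<in> H" using cover[OF z] by auto
      then show "z \<in> H <#> {\<one>, x}"
      proof cases
        case 1
        then have "z \<otimes> \<one> \<in> H <#> {\<one>, x}" unfolding set_mult_def by auto
        then show ?thesis using z by simp
      next
        case 2
        then have "(x \<otimes> z) \<otimes> x \<in> H <#> {\<one>, x}" unfolding set_mult_def by auto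
        moreover have "(x \<otimes> z) \<otimes> x = (x \<otimes> x) \<otimes> z"
          using x(1) z by (simp add: m_ac)
        moreover have "(x \<otimes> x) \<otimes> z = z" using x(3) z by simp
        ultimately show ?thesis by simp
      qed
    qed
  qed
  ultimately show "has_complement G {\<one>, x}" unfolding has_complement_def using H(1) by blast
qed

lemma U_mod_carrier: "m > 1 \<Longrightarrow> carrier (U_mod m) = {x. 0 < x \<and> x < m \<and> coprime x m}"
  unfolding U_mod_def units_of_carrier by (simp add: residues.res_units_eq residues.intro)

lemma U_mod_mult: "x \<otimes>\<^bsub>U_mod m\<^esub> y = (x * y) mod m"
  by (simp add: U_mod_def units_of_def residue_ring_def)

lemma U_mod_one: "\<one>\<^bsub>U_mod m\<^esub> = 1"
  by (simp add: U_mod_def units_of_def residue_ring_def)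

lemma comm_group_U_mod: "m > 1 \<Longrightarrow> comm_group (U_mod m)"
  unfolding U_mod_def by (simp add: residues.intro residues.comm_monoid comm_monoid.units_comm_group)

lemma finite_carrier_U_mod: "m > 1 \<Longrightarrow> finite (carrier (U_mod m))"
  by (rule finite_subset[of _ "{0..m}"]) (auto simp: U_mod_carrier)

lemma U_mod_square_eq_minus_one_iff:
  assumes "m > 1"
  shows "(\<exists>y\<in>carrier (U_mod m). y \<otimes>\<^bsub>U_mod m\<^esub> y = m - 1) \<longleftrightarrow> QuadRes m (-1)"
proof
  assume "\<exists>y\<in>carrier (U_mod m). y \<otimes>\<^bsub>U_mod m\<^esub> y = m - 1"
  then obtain y where "(y * y) mod m = (-1) mod m"
    using assms by (auto simp: U_mod_mult zmod_minus1)
  then show "QuadRes m (-1)" unfolding QuadRes_def cong_def power2_eq_square by blast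
next
  assume "QuadRes m (-1)"
  then obtain y where y: "[y^2 = -1] (mod m)" unfolding QuadRes_def by blast
  then have "[y * (- y) = 1] (mod m)"
    by (metis cong_minus_minus_iff minus_mult_right minus_minus power2_eq_square)
  then have "coprime y m" using coprime_iff_invertible_int by blast
  then have coprime: "coprime (y mod m) m" using assms by simp
  moreover have "0 < y mod m"
  proof -
    have "y mod m \<noteq> 0" using coprime assms by auto
    then show ?thesis using pos_mod_sign[of m y] assms by linarith
  qed
  moreover have "(y mod m) * (y mod m) mod m = m - 1"
    using y assms by (simp add: cong_def power2_eq_square mod_mult_eq zmod_minus1)
  ultimately show "\<exists>y\<in>carrier (U_mod m). y \<otimes>\<^bsub>U_mod m\<^esub> y = m - 1"
    using assms by (intro bexI[of _ "y mod m"]) (auto simp: U_mod_carrier U_mod_mult order_le_less)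
qed

lemma comm_group_product_group:
  assumes "\<And>i. i \<in> I \<Longrightarrow> comm_group (G i)"
  shows "comm_group (product_group I G)"
proof (rule group.group_comm_groupI)
  show "group (product_group I G)"
    by (rule product_group) (use assms comm_group.axioms(2) in blast)
next
  fix x y assume "x \<in> carrier (product_group I G)" "y \<in> carrier (product_group I G)"
  then show "x \<otimes>\<^bsub>product_group I G\<^esub> y = y \<otimes>\<^bsub>product_group I G\<^esub> x"
    using assms by (auto intro!: restrict_ext comm_monoid.m_comm simp: PiE_iff comm_group_def)
qed

lemma product_group_square_iff:
  assumes "x \<in> carrier (product_group I G)"
  shows "(\<exists>y\<in>carrier (product_group I G). y \<otimes>\<^bsub>product_group I G\<^esub> y = x)
    \<longleftrightarrow> (\<forall>i\<in>I. \<exists>y\<in>carrier (G i). y \<otimes>\<^bsub>G i\<^esub> y = x i)"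
proof
  assume "\<exists>y\<in>carrier (product_group I G). y \<otimes>\<^bsub>product_group I G\<^esub> y = x"
  then show "\<forall>i\<in>I. \<exists>y\<in>carrier (G i). y \<otimes>\<^bsub>G i\<^esub> y = x i"
    by (force simp: PiE_iff)
next
  assume "\<forall>i\<in>I. \<exists>y\<in>carrier (G i). y \<otimes>\<^bsub>G i\<^esub> y = x i"
  then obtain f where f: "\<And>i. i \<in> I \<Longrightarrow> f i \<in> carrier (G i) \<and> f i \<otimes>\<^bsub>G i\<^esub> f i = x i"
    by metis
  have "restrict f I \<otimes>\<^bsub>product_group I G\<^esub> restrict f I = x"
    using f assms by (auto simp: PiE_iff extensional_restrict intro!: extensionalityI[of _ I])
  moreover have "restrict f I \<in> carrier (product_group I G)" using f by simp
  ultimately show "\<exists>y\<in>carrier (product_group I G). y \<otimes>\<^bsub>product_group I G\<^esub> y = x" by blast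
qed

lemma minus_one_mem_unit_prod:
  assumes "\<And>i. i \<in> {1..n} \<Longrightarrow> m i > 1"
  shows "minus_one n m \<in> carrier (unit_prod n m)"
  using assms by (simp add: minus_one_def unit_prod_def U_mod_carrier)

lemma minus_one_mult_self:
  assumes "\<And>i. i \<in> {1..n} \<Longrightarrow> m i > 1"
  shows "minus_one n m \<otimes>\<^bsub>unit_prod n m\<^esub> minus_one n m = \<one>\<^bsub>unit_prod n m\<^esub>"
proof -
  have "(m i - 1) * (m i - 1) mod m i = 1" if "i \<in> {1..n}" for i
  proof -
    have "(m i - 1) * (m i - 1) = 1 + (m i - 2) * m i" by (simp add: algebra_simps)
    then show ?thesis using assms[OF that] by simp
  qed
  then show ?thesis
    by (auto simp: minus_one_def unit_prod_def U_mod_mult U_mod_one intro!: restrict_ext)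
qed

lemma minus_one_neq_one:
  assumes "n \<ge> 1" "m 1 \<noteq> 2"
  shows "minus_one n m \<noteq> \<one>\<^bsub>unit_prod n m\<^esub>"
proof
  assume "minus_one n m = \<one>\<^bsub>unit_prod n m\<^esub>"
  then have "minus_one n m 1 = \<one>\<^bsub>unit_prod n m\<^esub> 1" by simp
  then show False using assms by (simp add: minus_one_def unit_prod_def U_mod_one)
qed

lemma unit_prod_square_eq_minus_one_iff:
  assumes "\<And>i. i \<in> {1..n} \<Longrightarrow> m i > 1"
  shows "(\<exists>y\<in>carrier (unit_prod n m). y \<otimes>\<^bsub>unit_prod n m\<^esub> y = minus_one n m)
    \<longleftrightarrow> (\<forall>i\<in>{1..n}. QuadRes (m i) (-1))"
proof -
  have "minus_one n m \<in> carrier (product_group {1..n} (\<lambda>i. U_mod (m i)))"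
    using minus_one_mem_unit_prod[of n m] assms unfolding unit_prod_def by blast
  from product_group_square_iff[OF this] show ?thesis
    using assms U_mod_square_eq_minus_one_iff by (simp add: unit_prod_def minus_one_def)
qed

theorem lemma4p2:
  fixes n :: nat and m :: "nat \<Rightarrow> int"
  assumes "n \<ge> 1"
    and "\<And>i. i \<in> {1..n} \<Longrightarrow> odd (m i) \<and> m i > 1"
  shows "has_complement (unit_prod n m) {\<one>\<^bsub>unit_prod n m\<^esub>, minus_one n m}
     \<longleftrightarrow> (\<exists>j\<in>{1..n}. \<exists>p::int. prime p \<and> [p = 3] (mod 4) \<and> p dvd m j)"
proof -
  have m: "\<And>i. i \<in> {1..n} \<Longrightarrow> m i > 1" using assms(2) by blast
  have "m 1 \<noteq> 2" using assms by fastforce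
  have G: "comm_group (unit_prod n m)" and fin: "finite (carrier (unit_prod n m))"
    using m by (auto simp: unit_prod_def comm_group_U_mod finite_carrier_U_mod
        intro!: comm_group_product_group finite_PiE)
  have "has_complement (unit_prod n m) {\<one>\<^bsub>unit_prod n m\<^esub>, minus_one n m}
      \<longleftrightarrow> \<not> (\<exists>y\<in>carrier (unit_prod n m). y \<otimes>\<^bsub>unit_prod n m\<^esub> y = minus_one n m)"
    by (rule comm_group.has_complement_involution_iff[OF G fin minus_one_mem_unit_prod[of n m]
          minus_one_neq_one[of n m] minus_one_mult_self[of n m]])
      (use m assms(1) \<open>m 1 \<noteq> 2\<close> in auto)
  also have "\<dots> \<longleftrightarrow> \<not> (\<forall>i\<in>{1..n}. QuadRes (m i) (-1))"
    using unit_prod_square_eq_minus_one_iff[OF m] by simp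
  also have "\<dots> \<longleftrightarrow> (\<exists>j\<in>{1..n}. \<exists>p::int. prime p \<and> [p = 3] (mod 4) \<and> p dvd m j)"
    using QuadRes_minus_one_odd_iff assms(2) by auto
  finally show ?thesis .
qed

end
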